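(* Let $L\ne\{0,1\}$ be a totally ordered C-lattice domain in which every element is a join of principal elements. The following are equivalent: (i) $L$ is sharp; (ii) $L$ is pseudo-Dedekind; (iii) $L$ is isomorphic (as an ordered multiplicative lattice) to $\mathbb{Z}_-$ or to $\mathbb{R}_1$.
   Context: A multiplicative lattice is a complete lattice $(L,\le)$ with bottom $0$ and top $1$ which is also a commutative monoid with identity $1$ such that $a(\bigvee_\alpha b_\alpha)=\bigvee_\alpha(ab_\alpha)$ for all $a,b_\alpha\in L$. For $x,y\in L$, $(y:x)=\bigvee\{a\in L: ax\le y\}$. An element $c$ is compact if $c\le\bigvee S$ implies $c\le\bigvee T$ for some finite $T\subseteq S$. A C-lattice is a multiplicative lattice in which $1$ is compact, the product of two compact elements is compact, and every element is a join of compact elements. A proper element $p\ne1$ is prime if $xy\le p$ implies $x\le p$ or $y\le p$; $L$ is a domain if $0$ is prime. An element $x$ is principal if $y\wedge zx=((y:x)\wedge z)x$ and $y\vee(z:x)=((yx\vee z):x)$ for all $y,z\in L$. $L$ is sharp if whenever $a_1a_2\le b$ with $a_1,a_2,b\in L$, there exist $b_1,b_2\in L$ with $a_i\le b_i$ ($i=1,2$) and $b=b_1b_2$. $L$ is pseudo-Dedekind if $(x:a)$ is principal whenever $x,a\in L$ and $x$ is principal. $\mathbb{Z}_-$ is the set of integers $\le0$ together with a symbol $-\infty$, with the usual order and with addition as multiplication (so $0$ is the top/identity and $-\infty$ the bottom). $\mathbb{R}_1$ is the set of all intervals $(r,\infty]$ and $[r,\infty]$ with $r$ a nonnegative real number,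 together with $\{\infty\}$, ordered by inclusion and with interval (Minkowski) addition as multiplication (so $[0,\infty]$ is the top/identity and $\{\infty\}$ the bottom); it is isomorphic to the ideal lattice of a valuation domain with value group $\mathbb{R}$. *)

theory Defs
  imports "HOL-Library.Extended_Real"
begin

text \<open>A multiplicative lattice: the complete lattice structure is that of the type 'a
  (bottom = bot = 0, top = top = 1); the multiplication is the parameter m.\<close>

definition mult_lattice :: "('a::complete_lattice \<Rightarrow> 'a \<Rightarrow> 'a) \<Rightarrow> bool" where
  "mult_lattice m \<longleftrightarrow>
     (\<forall>a b c. m (m a b) c = m a (m b c)) \<and>
     (\<forall>a b. m a b = m b a) \<and>
     (\<forall>a. m top a = a) \<and>
     (\<forall>a B. m a (Sup B) = Sup ((\<lambda>b. m a b) ` B))"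

definition res :: "('a::complete_lattice \<Rightarrow> 'a \<Rightarrow> 'a) \<Rightarrow> 'a \<Rightarrow> 'a \<Rightarrow> 'a" where
  "res m y x = Sup {a. m a x \<le> y}"   (* (y : x) *)

definition compact_el :: "'a::complete_lattice \<Rightarrow> bool" where
  "compact_el c \<longleftrightarrow> (\<forall>S. c \<le> Sup S \<longrightarrow> (\<exists>T. T \<subseteq> S \<and> finite T \<and> c \<le> Sup T))"

definition C_lattice :: "('a::complete_lattice \<Rightarrow> 'a \<Rightarrow> 'a) \<Rightarrow> bool" where
  "C_lattice (m :: 'a \<Rightarrow> 'a \<Rightarrow> 'a) \<longleftrightarrow> mult_lattice m \<and> compact_el (top :: 'a) \<and>
     (\<forall>a b. compact_el a \<longrightarrow> compact_el b \<longrightarrow> compact_el (m a b)) \<and>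
     (\<forall>x :: 'a. \<exists>S. (\<forall>s\<in>S. compact_el s) \<and> x = Sup S)"

definition prime_el :: "('a::complete_lattice \<Rightarrow> 'a \<Rightarrow> 'a) \<Rightarrow> 'a \<Rightarrow> bool" where
  "prime_el m p \<longleftrightarrow> p \<noteq> top \<and> (\<forall>x y. m x y \<le> p \<longrightarrow> x \<le> p \<or> y \<le> p)"

definition lattice_domain :: "('a::complete_lattice \<Rightarrow> 'a \<Rightarrow> 'a) \<Rightarrow> bool" where
  "lattice_domain m \<longleftrightarrow> prime_el m bot"

definition principal_el :: "('a::complete_lattice \<Rightarrow> 'a \<Rightarrow> 'a) \<Rightarrow> 'a \<Rightarrow> bool" where
  "principal_el m x \<longleftrightarrow>
     (\<forall>y z. inf y (m z x) = m (inf (res m y x) z) x \<and>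
            sup y (res m z x) = res m (sup (m y x) z) x)"

definition sharp :: "('a::complete_lattice \<Rightarrow> 'a \<Rightarrow> 'a) \<Rightarrow> bool" where
  "sharp m \<longleftrightarrow> (\<forall>a1 a2 b. m a1 a2 \<le> b \<longrightarrow>
      (\<exists>b1 b2. a1 \<le> b1 \<and> a2 \<le> b2 \<and> b = m b1 b2))"

definition pseudo_Dedekind :: "('a::complete_lattice \<Rightarrow> 'a \<Rightarrow> 'a) \<Rightarrow> bool" where
  "pseudo_Dedekind m \<longleftrightarrow> (\<forall>x a. principal_el m x \<longrightarrow> principal_el m (res m x a))"

definition ml_iso :: "('a::complete_lattice \<Rightarrow> 'a \<Rightarrow> 'a) \<Rightarrow> 'b set \<Rightarrow> ('b \<Rightarrow> 'b \<Rightarrow> bool)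
    \<Rightarrow> ('b \<Rightarrow> 'b \<Rightarrow> 'b) \<Rightarrow> bool" where
  "ml_iso m C le mu \<longleftrightarrow> (\<exists>f. bij_betw f UNIV C \<and>
      (\<forall>a b. a \<le> b \<longleftrightarrow> le (f a) (f b)) \<and>
      (\<forall>a b. f (m a b) = mu (f a) (f b)))"

text \<open>\<open>\<int>_-\<close>: None stands for -\<infinity>, Some k for the integer k \<le> 0.\<close>

definition Zm_carrier :: "int option set" where
  "Zm_carrier = insert None {Some k | k. k \<le> 0}"

fun Zm_le :: "int option \<Rightarrow> int option \<Rightarrow> bool" where
  "Zm_le None _ = True"
| "Zm_le (Some a) None = False"
| "Zm_le (Some a) (Some b) = (a \<le> b)"

fun Zm_mult :: "int option \<Rightarrow> int option \<Rightarrow> int option" where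
  "Zm_mult (Some a) (Some b) = Some (a + b)"
| "Zm_mult _ _ = None"

definition R1_carrier :: "ereal set set" where
  "R1_carrier = {{x. ereal r < x} | r. r \<ge> 0} \<union> {{x. ereal r \<le> x} | r. r \<ge> 0} \<union> {{\<infinity>}}"

definition R1_le :: "ereal set \<Rightarrow> ereal set \<Rightarrow> bool" where
  "R1_le A B \<longleftrightarrow> A \<subseteq> B"

definition R1_mult :: "ereal set \<Rightarrow> ereal set \<Rightarrow> ereal set" where
  "R1_mult A B = {x + y | x y. x \<in> A \<and> y \<in> B}"

end

theory Submission
  imports Defs
begin

text \<open>Sharp implies pseudo-Dedekind: sharpness applied to \<open>(x : a) a \<le> x\<close> writes a principal
  \<open>x \<noteq> 0\<close> as \<open>x = b\<^sub>1 b\<^sub>2\<close> with \<open>(x : a) \<le> b\<^sub>1\<close> and \<open>a \<le> b\<^sub>2\<close>, whence \<open>b\<^sub>1 = (x : a)\<close>; and since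
  principal elements of a chain with compact \<open>1\<close> are compact, factors of \<open>x\<close> are principal.

  Pseudo-Dedekind implies \<open>L \<cong> \<int>\<^sub>-\<close> or \<open>L \<cong> \<real>\<^sub>1\<close>: let \<open>M\<close> be the largest element below \<open>1\<close>
  (it exists since \<open>1\<close> is compact). Principality of residuals makes the powers of every
  principal \<open>w \<noteq> 0, 1\<close> coinitial among the nonzero elements. If \<open>M\<close> is principal, every
  nonzero element is a power of \<open>M\<close>, giving \<open>\<int>\<^sub>-\<close>. Otherwise fix a principal \<open>0 < u < 1\<close> and
  let \<open>v(x) = sup\<^sub>q \<lfloor>log\<^sub>u x\<^sup>q\<rfloor> / q\<close>: this is an additive, strictly order-reversing valuation on
  the nonzero principal elements, and since \<open>M\<close> is not principal every principal \<open>w \<noteq> 1\<close>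
  splits into two factors, one of value at most \<open>v(w)/2\<close>; so the values are dense in, and
  then equal to, \<open>[0, \<infinity>)\<close>. Sending \<open>y\<close> to the set of values of the principal elements
  below it (together with \<open>\<infinity>\<close>) is an isomorphism onto \<open>\<real>\<^sub>1\<close>.

  Finally \<open>\<int>\<^sub>-\<close> and \<open>\<real>\<^sub>1\<close> are sharp, and sharpness is invariant under isomorphism.\<close>

lemma Sup_finite_in_chain:
  fixes T :: "'a::complete_lattice set"
  assumes linear: "\<forall>x y :: 'a. x \<le> y \<or> y \<le> x" and "finite T" "T \<noteq> {}"
  shows "Sup T \<in> T"
  using assms(2,3)
proof (induction T rule: finite_ne_induct)
  case (insert x F)
  then show ?case using linear by (metis Sup_insert insertCI sup.absorb1 sup.absorb2)
qed simp

lemma zero_if_multiples_bounded: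
  fixes d c :: real
  assumes bound: "\<And>q::nat. q \<ge> 1 \<Longrightarrow> \<bar>real q * d\<bar> \<le> c"
  shows "d = 0"
proof (rule ccontr)
  assume "d \<noteq> 0"
  then obtain n :: nat where n: "c < real n * \<bar>d\<bar>"
    using ex_less_of_nat_mult[of "\<bar>d\<bar>" c] by auto
  define q where "q = max 1 n"
  have "real n * \<bar>d\<bar> \<le> real q * \<bar>d\<bar>"
    unfolding q_def by (intro mult_right_mono) auto
  then have "c < \<bar>real q * d\<bar>" using n by (simp add: abs_mult)
  then show False using bound[of q] by (simp add: q_def)
qed

lemma eq_if_same_lower_bounds:
  fixes x y :: "'a::order"
  shows "(\<And>a. a \<le> x \<longleftrightarrow> a \<le> y) \<Longrightarrow> x = y"
  by (meson order.antisym order_refl)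

section \<open>Multiplicative lattices\<close>

primrec mpow :: "('a::top \<Rightarrow> 'a \<Rightarrow> 'a) \<Rightarrow> 'a \<Rightarrow> nat \<Rightarrow> 'a" where
  "mpow m x 0 = top"
| "mpow m x (Suc n) = m x (mpow m x n)"

locale multiplicative_lattice =
  fixes m :: "'a::complete_lattice \<Rightarrow> 'a \<Rightarrow> 'a"
  assumes mult_lattice: "mult_lattice m"
begin

lemma mult_assoc: "m (m a b) c = m a (m b c)"
  using mult_lattice unfolding mult_lattice_def by blast

lemma mult_commute: "m a b = m b a"
  using mult_lattice unfolding mult_lattice_def by blast

lemma mult_left_commute: "m a (m b c) = m b (m a c)"
  using mult_assoc mult_commute by metis

lemma mult_top_left [simp]: "m top a = a"
  using mult_lattice unfolding mult_lattice_def by blast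

lemma mult_top_right [simp]: "m a top = a"
  using mult_commute mult_top_left by metis

lemma mult_Sup_right: "m a (Sup B) = Sup ((\<lambda>b. m a b) ` B)"
  using mult_lattice unfolding mult_lattice_def by blast

lemma mult_Sup_left: "m (Sup B) a = Sup ((\<lambda>b. m b a) ` B)"
  using mult_Sup_right mult_commute by (metis (no_types, lifting) image_cong)

lemma mult_bot_right [simp]: "m a bot = bot"
  using mult_Sup_right[of a "{}"] by simp

lemma mult_bot_left [simp]: "m bot a = bot"
  using mult_bot_right mult_commute by metis

lemma mult_mono_right: "a \<le> b \<Longrightarrow> m c a \<le> m c b"
  using mult_Sup_right[of c "{a, b}"] by (simp add: sup.absorb2 le_iff_sup)

lemma mult_mono_left: "a \<le> b \<Longrightarrow> m a c \<le> m b c"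
  using mult_mono_right mult_commute by metis

lemma mult_mono: "a \<le> b \<Longrightarrow> c \<le> d \<Longrightarrow> m a c \<le> m b d"
  using mult_mono_right mult_mono_left order_trans by metis

lemma mult_le_left: "m a b \<le> a"
  using mult_mono_right[of b top a] by simp

lemma le_res_iff: "a \<le> res m y x \<longleftrightarrow> m a x \<le> y"
proof
  have "m (res m y x) x \<le> y"
    unfolding res_def mult_Sup_left by (auto intro!: Sup_least)
  then show "a \<le> res m y x \<Longrightarrow> m a x \<le> y"
    using mult_mono_left order_trans by blast
qed (simp add: res_def Sup_upper)

lemma res_mult_le: "m (res m y x) x \<le> y"
  using le_res_iff by blast

lemma le_res: "m a x \<le> y \<Longrightarrow> a \<le> res m y x"
  using le_res_iff by blast

lemma res_res: "res m (res m y w) x = res m y (m x w)"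
  by (rule eq_if_same_lower_bounds) (simp add: le_res_iff mult_assoc)

lemma res_top [simp]: "res m y top = y"
  by (rule eq_if_same_lower_bounds) (simp add: le_res_iff)

lemma res_bot [simp]: "res m y bot = top"
  by (rule eq_if_same_lower_bounds) (simp add: le_res_iff)

abbreviation is_principal :: "'a \<Rightarrow> bool" where
  "is_principal x \<equiv> principal_el m x"

lemma principal_top: "is_principal top"
  unfolding principal_el_def by simp

lemma principal_bot: "is_principal bot"
  unfolding principal_el_def by simp

lemma principal_mult:
  assumes x: "is_principal x" and w: "is_principal w"
  shows "is_principal (m x w)"
  unfolding principal_el_def
proof (intro allI conjI)
  fix y z
  have X: "inf y (m z x) = m (inf (res m y x) z) x" "sup y (res m z x) = res m (sup (m y x) z) x"
    for y z using x unfolding principal_el_def by auto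
  have W: "inf y (m z w) = m (inf (res m y w) z) w" "sup y (res m z w) = res m (sup (m y w) z) w"
    for y z using w unfolding principal_el_def by auto
  have "inf y (m z (m x w)) = m (inf (res m y w) (m z x)) w"
    by (simp add: W(1) flip: mult_assoc)
  also have "\<dots> = m (inf (res m y (m x w)) z) (m x w)"
    by (simp add: X(1) res_res mult_assoc)
  finally show "inf y (m z (m x w)) = m (inf (res m y (m x w)) z) (m x w)" .
  have "sup y (res m z (m x w)) = res m (sup (m y x) (res m z w)) x"
    by (simp add: X(2) flip: res_res)
  also have "\<dots> = res m (sup (m y (m x w)) z) (m x w)"
    by (simp add: W(2) res_res mult_assoc)
  finally show "sup y (res m z (m x w)) = res m (sup (m y (m x w)) z) (m x w)" .
qed

lemma principal_factor: "is_principal x \<Longrightarrow> y \<le> x \<Longrightarrow> y = m (res m y x) x"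
  unfolding principal_el_def by (metis inf.absorb1 inf_top.right_neutral mult_top_left)

abbreviation pow :: "'a \<Rightarrow> nat \<Rightarrow> 'a" where
  "pow \<equiv> mpow m"

lemma pow_add: "pow x (a + b) = m (pow x a) (pow x b)"
  by (induction a) (simp_all add: mult_assoc)

lemma pow_mult_base: "pow (m x y) n = m (pow x n) (pow y n)"
  by (induction n) (simp_all add: mult_assoc mult_left_commute)

lemma pow_pow: "pow (pow x a) b = pow x (a * b)"
  by (induction b) (simp_all add: pow_add)

lemma principal_pow: "is_principal x \<Longrightarrow> is_principal (pow x n)"
  by (induction n) (simp_all add: principal_top principal_mult)

lemma pow_mono: "x \<le> y \<Longrightarrow> pow x n \<le> pow y n"
  by (induction n) (simp_all add: mult_mono)

lemma pow_antimono: "b \<le> a \<Longrightarrow> pow x a \<le> pow x b"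
  by (metis le_Suc_ex mult_le_left pow_add)

end

locale multiplicative_domain = multiplicative_lattice +
  assumes domain: "lattice_domain m"
begin

lemma bot_neq_top: "(bot::'a) \<noteq> top"
  using domain unfolding lattice_domain_def prime_el_def by simp

lemma mult_eq_bot_iff [simp]: "m x y = bot \<longleftrightarrow> x = bot \<or> y = bot"
  using domain unfolding lattice_domain_def prime_el_def by (auto simp: bot_unique)

lemma res_bot_left: "a \<noteq> bot \<Longrightarrow> res m bot a = bot"
  using res_mult_le[of bot a] by (simp add: bot_unique)

lemma principal_cancel_le:
  assumes "is_principal x" "x \<noteq> bot" "m x a \<le> m x b"
  shows "a \<le> b"
proof -
  have "res m (m b x) x = b"
    using assms(1) res_bot_left[OF assms(2)] unfolding principal_el_def
    by (metis sup_bot.right_neutral)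
  then show ?thesis using assms(3) le_res_iff mult_commute by metis
qed

lemma principal_cancel: "is_principal x \<Longrightarrow> x \<noteq> bot \<Longrightarrow> m x a = m x b \<Longrightarrow> a = b"
  using principal_cancel_le[of x a b] principal_cancel_le[of x b a] by simp

lemma mult_strict_mono:
  assumes "is_principal d" "a < b" "c < d"
  shows "m a c < m b d"
proof -
  have le: "m a c \<le> m a d" "m a d \<le> m b d"
    using assms by (simp_all add: mult_mono_right mult_mono_left)
  have "m a c \<noteq> m b d"
  proof
    assume "m a c = m b d"
    then have "m d a = m d b" using le by (simp add: mult_commute order.antisym)
    then show False using principal_cancel assms by force
  qed
  then show ?thesis using le by (simp add: less_le)
qed

lemma pow_strict_mono:
  assumes "is_principal y" "x < y"
  shows "pow x (Suc k) < pow y (Suc k)"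
proof (induction k)
  case (Suc k)
  then show ?case
    using mult_strict_mono[OF principal_pow[OF assms(1), of "Suc k"] assms(2)] by simp
qed (simp add: assms)

lemma pow_neq_bot: "x \<noteq> bot \<Longrightarrow> pow x n \<noteq> bot"
  by (induction n) (simp_all add: bot_neq_top[symmetric])

lemma pow_Suc_less:
  assumes "is_principal x" "x \<noteq> bot" "x \<noteq> top"
  shows "pow x (Suc n) < pow x n"
proof -
  have "pow x (Suc n) \<noteq> pow x n"
  proof
    assume "pow x (Suc n) = pow x n"
    then have "m (pow x n) x = m (pow x n) top" by (simp add: mult_commute)
    then show False using principal_cancel principal_pow pow_neq_bot assms by blast
  qed
  then show ?thesis using pow_antimono[of n "Suc n" x] by (simp add: less_le)
qed

lemma pow_le_pow_iff:
  assumes "is_principal x" "x \<noteq> bot" "x \<noteq> top"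
  shows "pow x a \<le> pow x b \<longleftrightarrow> b \<le> a"
proof
  assume le: "pow x a \<le> pow x b"
  show "b \<le> a"
  proof (rule ccontr)
    assume "\<not> b \<le> a"
    then have "pow x b \<le> pow x (Suc a)" by (intro pow_antimono) simp
    also have "\<dots> < pow x a" using pow_Suc_less assms by blast
    finally show False using le by simp
  qed
qed (rule pow_antimono)

lemma pow_less_pow_iff:
  assumes "is_principal x" "x \<noteq> bot" "x \<noteq> top"
  shows "pow x a < pow x b \<longleftrightarrow> b < a"
  using pow_le_pow_iff[OF assms] by (metis not_le less_le_not_le)

end

section \<open>Principally generated chain domains\<close>

locale principal_chain_domain = multiplicative_domain +
  assumes top_compact: "compact_el (top::'a)"
    and linear: "\<forall>x y :: 'a. x \<le> y \<or> y \<le> x"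
    and principally_generated: "\<forall>x :: 'a. \<exists>S. (\<forall>s\<in>S. principal_el m s) \<and> x = Sup S"
begin

lemma not_le_iff_less: "\<not> x \<le> y \<longleftrightarrow> y < (x::'a)"
  using linear[rule_format, of x y] less_le_not_le by blast

lemma top_mem_if_top_le_Sup:
  assumes "top \<le> Sup (S :: 'a set)"
  shows "top \<in> S"
proof -
  obtain T where T: "T \<subseteq> S" "finite T" "top \<le> Sup T"
    using top_compact assms unfolding compact_el_def by blast
  have "T \<noteq> {}" using T(3) bot_neq_top by (auto simp: top_unique)
  then have "Sup T \<in> T" using Sup_finite_in_chain[OF linear T(2)] by blast
  then show ?thesis using T by (auto simp: top_unique)
qed

lemma principal_le_Sup_imp_le_mem:
  assumes x: "is_principal x" "x \<noteq> bot" and le: "x \<le> Sup S"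
  shows "\<exists>s\<in>S. x \<le> s"
proof (rule ccontr)
  assume "\<not> (\<exists>s\<in>S. x \<le> s)"
  then have below: "\<forall>s\<in>S. s \<le> x \<and> s \<noteq> x" using not_le_iff_less by auto
  let ?T = "(\<lambda>s. res m s x) ` S"
  have "m (Sup ?T) x = Sup S"
    using below x(1) principal_factor by (simp add: mult_Sup_left image_image)
  then have "m x top \<le> m x (Sup ?T)" using le by (simp add: mult_commute)
  then have "top \<in> ?T" using principal_cancel_le x top_mem_if_top_le_Sup by blast
  then obtain s where "s \<in> S" "res m s x = top" by auto
  then show False using principal_factor[OF x(1)] below by force
qed

lemma Sup_principal_below: "Sup {p. is_principal p \<and> p \<le> x} = x"
proof (rule order.antisym)
  obtain S where S: "\<forall>s\<in>S. is_principal s" "x = Sup S" using principally_generated by blast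
  then have "S \<subseteq> {p. is_principal p \<and> p \<le> x}" by (auto simp: Sup_upper)
  then show "x \<le> Sup {p. is_principal p \<and> p \<le> x}" using S(2) by (simp add: Sup_subset_mono)
qed (rule Sup_least, simp)

lemma exists_principal_below: "x \<noteq> bot \<Longrightarrow> \<exists>p. is_principal p \<and> p \<noteq> bot \<and> p \<le> x"
  using Sup_principal_below[of x] Sup_bot_conv(1)[of "{p. is_principal p \<and> p \<le> x}"] by auto

lemma principal_le_mult_Sup_imp_le_mult:
  assumes "is_principal x" "x \<noteq> bot" "x \<le> m (Sup S1) (Sup S2)"
  shows "\<exists>s1\<in>S1. \<exists>s2\<in>S2. x \<le> m s1 s2"
proof -
  obtain s2 where s2: "s2 \<in> S2" "x \<le> m (Sup S1) s2"
    using principal_le_Sup_imp_le_mem[OF assms(1,2)] assms(3) by (auto simp: mult_Sup_right)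
  moreover obtain s1 where "s1 \<in> S1" "x \<le> m s1 s2"
    using principal_le_Sup_imp_le_mem[OF assms(1,2)] s2(2) by (auto simp: mult_Sup_left)
  ultimately show ?thesis by blast
qed

lemma factor_of_principal_is_principal:
  assumes x: "is_principal x" "x \<noteq> bot" and xb: "x = m b1 b2"
  shows "is_principal b1"
proof -
  obtain s1 s2 where s: "is_principal s1" "s1 \<le> b1" "is_principal s2" "s2 \<le> b2" "x \<le> m s1 s2"
    using principal_le_mult_Sup_imp_le_mult[OF x, of "{p. is_principal p \<and> p \<le> b1}"
        "{p. is_principal p \<and> p \<le> b2}"] xb Sup_principal_below by force
  have xs: "x = m s1 s2" using s xb mult_mono by (simp add: order.antisym)
  have nz: "s1 \<noteq> bot" "s2 \<noteq> bot" using xs x(2) by auto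
  have "m s1 b2 = m s1 s2" using xs xb s mult_mono_right mult_mono_left by (metis order.antisym)
  then have "b2 = s2" using principal_cancel s nz by blast
  then have "m s2 b1 = m s2 s1" using xs xb by (simp add: mult_commute)
  then show ?thesis using principal_cancel s nz by metis
qed

lemma sharp_imp_pseudo_Dedekind:
  assumes "sharp m"
  shows "pseudo_Dedekind m"
  unfolding pseudo_Dedekind_def
proof (intro allI impI)
  fix x a assume x: "is_principal x"
  show "is_principal (res m x a)"
  proof (cases "x = bot")
    case True
    then show ?thesis by (cases "a = bot") (simp_all add: res_bot_left principal_top principal_bot)
  next
    case False
    obtain b1 b2 where b: "res m x a \<le> b1" "a \<le> b2" "x = m b1 b2"
      using assms res_mult_le unfolding sharp_def by blast
    have "m b1 a \<le> x" using b mult_mono_right by metis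
    then have "res m x a = b1" using b(1) le_res by (simp add: order.antisym)
    then show ?thesis using factor_of_principal_is_principal x False b(3) by simp
  qed
qed

definition max_elt :: 'a where
  "max_elt = Sup {y. y \<noteq> top}"

lemma le_max_elt: "y \<noteq> top \<Longrightarrow> y \<le> max_elt"
  unfolding max_elt_def by (simp add: Sup_upper)

lemma max_elt_neq_top: "max_elt \<noteq> top"
  using top_mem_if_top_le_Sup[of "{y. y \<noteq> top}"] unfolding max_elt_def by auto

lemma max_elt_neq_bot:
  assumes "(UNIV::'a set) \<noteq> {bot, top}"
  shows "max_elt \<noteq> bot"
proof -
  obtain y :: 'a where "y \<noteq> bot" "y \<noteq> top" using assms by blast
  then show ?thesis using le_max_elt bot_unique by metis
qed

end

section \<open>Pseudo-Dedekind chains and the discrete case\<close>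

lemma ml_isoI:
  fixes m :: "'a::complete_lattice \<Rightarrow> 'a \<Rightarrow> 'a"
  assumes le: "\<And>a b. a \<le> b \<longleftrightarrow> le (f a) (f b)"
    and mult: "\<And>a b. f (m a b) = mu (f a) (f b)"
    and range: "range f = C"
  shows "ml_iso m C le mu"
proof -
  have "inj f"
    by (rule injI) (metis le order.antisym order_refl)
  then show ?thesis unfolding ml_iso_def bij_betw_def using le mult range by blast
qed

locale pseudo_Dedekind_chain_domain = principal_chain_domain +
  assumes pseudo_Dedekind: "pseudo_Dedekind m"
begin

lemma principal_res: "is_principal x \<Longrightarrow> is_principal (res m x a)"
  using pseudo_Dedekind unfolding pseudo_Dedekind_def by blast

lemma eq_bot_if_mult_principal_eq:
  assumes w: "is_principal w" "w \<noteq> top" and pw: "m p w = p"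
  shows "p = bot"
proof (rule ccontr)
  assume "p \<noteq> bot"
  then obtain x where x: "is_principal x" "x \<noteq> bot" "x \<le> p"
    using exists_principal_below by blast
  define a where "a = res m x p"
  have a: "is_principal a" "m a p \<le> x" "x \<le> a"
    unfolding a_def using principal_res x by (simp_all add: res_mult_le le_res mult_le_left)
  have "a \<noteq> bot" using a(3) x(2) by (auto simp: bot_unique)
  show False
  proof (cases "w \<le> a")
    case True
    then have "p \<le> m a p" using pw mult_mono_right by (metis mult_commute)
    then have "x = p" using a x by (simp add: order.antisym)
    then have "m p w = m p top" using pw by simp
    then show False using principal_cancel x w \<open>x = p\<close> by blast
  next
    case False
    define a' where "a' = res m a w"
    have a_eq: "a = m a' w"
      unfolding a'_def using principal_factor[OF w(1)] False not_le_iff_less by auto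
    have "m a' p = m a p" using a_eq pw by (metis mult_assoc mult_commute)
    then have "a' \<le> a" using a(2) unfolding a_def by (metis le_res)
    moreover have "a \<le> a'" using a_eq mult_le_left by metis
    ultimately have "m a w = m a top" using a_eq by (simp add: mult_commute)
    then show False using principal_cancel a \<open>a \<noteq> bot\<close> w by blast
  qed
qed

text \<open>The infimum \<open>p\<close> of the powers of \<open>w\<close> satisfies \<open>p w = p\<close>, as \<open>(p : w) \<le> p\<close> by
  cancellation.\<close>

lemma archimedean:
  assumes w: "is_principal w" "w \<noteq> bot" "w \<noteq> top" and y: "y \<noteq> bot"
  shows "\<exists>n. pow w n < y"
proof (rule ccontr)
  assume "\<not> ?thesis"
  then have y_le: "y \<le> pow w n" for n using not_le_iff_less by blast
  define p where "p = Inf (range (pow w))"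
  have p_le: "p \<le> pow w n" for n unfolding p_def by (simp add: Inf_lower)
  have "res m p w \<le> pow w n" for n
  proof -
    have "m (res m p w) w \<le> pow w (Suc n)" using res_mult_le p_le order_trans by metis
    then show ?thesis using principal_cancel_le w by (simp add: mult_commute)
  qed
  then have "res m p w \<le> p" unfolding p_def by (auto intro: Inf_greatest)
  moreover have "p \<le> w" using p_le[of 1] by simp
  ultimately have "p \<le> m p w" using principal_factor[OF w(1)] mult_mono_left by metis
  then have "m p w = p" using mult_le_left by (simp add: order.antisym)
  then have "p = bot" using eq_bot_if_mult_principal_eq w by blast
  moreover have "y \<le> p" unfolding p_def using y_le by (auto intro: Inf_greatest)
  ultimately show False using y by (simp add: bot_unique)
qed

definition log_floor :: "'a \<Rightarrow> 'a \<Rightarrow> nat" where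
  "log_floor w y = (GREATEST n. y \<le> pow w n)"

lemma le_pow_iff_le_log_floor:
  assumes w: "is_principal w" "w \<noteq> bot" "w \<noteq> top" and y: "y \<noteq> bot"
  shows "y \<le> pow w n \<longleftrightarrow> n \<le> log_floor w y"
proof -
  obtain N where N: "pow w N < y" using archimedean[OF w y] by blast
  have bound: "k \<le> N" if "y \<le> pow w k" for k
  proof (rule ccontr)
    assume "\<not> k \<le> N"
    then have "pow w k \<le> pow w N" by (intro pow_antimono) simp
    then show False using N that by simp
  qed
  have "y \<le> pow w (log_floor w y)"
    unfolding log_floor_def by (rule GreatestI_nat[of _ 0 N]) (simp_all add: bound)
  moreover have "n \<le> log_floor w y" if "y \<le> pow w n"
    unfolding log_floor_def using that bound by (rule Greatest_le_nat)
  ultimately show ?thesis using pow_antimono order_trans by blast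
qed

lemma pow_Suc_log_floor_less:
  assumes w: "is_principal w" "w \<noteq> bot" "w \<noteq> top" and y: "y \<noteq> bot"
  shows "pow w (Suc (log_floor w y)) < y"
  using le_pow_iff_le_log_floor[OF assms, of "Suc (log_floor w y)"] not_le_iff_less by simp

lemma log_floor_pow:
  assumes w: "is_principal w" "w \<noteq> bot" "w \<noteq> top"
  shows "log_floor w (pow w n) = n"
  using le_pow_iff_le_log_floor[OF w pow_neq_bot[OF w(2)]] pow_le_pow_iff[OF w]
  by (metis order.antisym order_refl)

lemma eq_pow_max_elt:
  assumes M: "is_principal max_elt" "max_elt \<noteq> bot" and y: "y \<noteq> bot"
  shows "y = pow max_elt (log_floor max_elt y)"
proof -
  note M' = M max_elt_neq_top
  define n where "n = log_floor max_elt y"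
  have "y \<le> pow max_elt n" using le_pow_iff_le_log_floor[OF M' y] n_def by simp
  then have y_eq: "y = m (res m y (pow max_elt n)) (pow max_elt n)"
    using principal_factor principal_pow M by blast
  have "res m y (pow max_elt n) = top"
  proof (rule ccontr)
    assume "res m y (pow max_elt n) \<noteq> top"
    then have "y \<le> pow max_elt (Suc n)" using y_eq le_max_elt mult_mono_left by (metis mpow.simps(2))
    then show False using pow_Suc_log_floor_less[OF M' y] n_def by (simp add: not_le_iff_less[symmetric])
  qed
  then show ?thesis using y_eq n_def by simp
qed

theorem ml_iso_Zm_if_max_elt_principal:
  assumes M: "is_principal max_elt" "max_elt \<noteq> bot"
  shows "ml_iso m Zm_carrier Zm_le Zm_mult"
proof -
  note M' = M max_elt_neq_top
  define f where "f y = (if y = bot then None else Some (- int (log_floor max_elt y)))" for y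
  have f_bot: "f bot = None" unfolding f_def by simp
  have f_pow: "f (pow max_elt n) = Some (- int n)" for n
    unfolding f_def using log_floor_pow[OF M'] pow_neq_bot M by simp
  have zero_or_pow: "y = bot \<or> (\<exists>n. y = pow max_elt n)" for y
    using eq_pow_max_elt[OF M] by blast
  have pow_nz: "pow max_elt n \<noteq> bot" for n using pow_neq_bot M by blast
  show ?thesis
  proof (rule ml_isoI)
    fix a b
    show "a \<le> b \<longleftrightarrow> Zm_le (f a) (f b)"
      using zero_or_pow[of a] zero_or_pow[of b]
    proof (elim disjE exE)
      fix i j assume "a = pow max_elt i" "b = pow max_elt j"
      then show ?thesis by (simp add: f_pow pow_le_pow_iff[OF M'])
    qed (simp_all add: f_bot f_pow pow_nz bot_unique)
    show "f (m a b) = Zm_mult (f a) (f b)"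
      using zero_or_pow[of a] zero_or_pow[of b]
    proof (elim disjE exE)
      fix i j assume "a = pow max_elt i" "b = pow max_elt j"
      then show ?thesis by (simp add: f_pow flip: pow_add)
    qed (simp_all add: f_bot f_pow)
  next
    show "range f = Zm_carrier"
    proof (rule set_eqI)
      fix z
      have "Some k \<in> range f" if "k \<le> 0" for k
      proof -
        have "f (pow max_elt (nat (- k))) = Some k" using f_pow that by simp
        then show ?thesis by (metis rangeI)
      qed
      then show "z \<in> range f \<longleftrightarrow> z \<in> Zm_carrier"
        unfolding Zm_carrier_def using f_bot by (auto simp: f_def)
    qed
  qed
qed

end

section \<open>The intervals of \<open>\<real>\<^sub>1\<close>\<close>

definition ray :: "real \<Rightarrow> bool \<Rightarrow> ereal set" where
  "ray r c = {x. ereal r < x \<or> (c \<and> x = ereal r)}"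

lemma R1_carrier_iff_ray: "X \<in> R1_carrier \<longleftrightarrow> X = {\<infinity>} \<or> (\<exists>r c. r \<ge> 0 \<and> X = ray r c)"
proof -
  have "{x. ereal r < x} = ray r False" "{x. ereal r \<le> x} = ray r True" for r
    unfolding ray_def by (auto simp: le_less)
  then have "(\<exists>c. X = ray r c) \<longleftrightarrow> X = {x. ereal r < x} \<or> X = {x. ereal r \<le> x}" for r
    by (metis (full_types))
  then show ?thesis unfolding R1_carrier_def by blast
qed

lemma infinity_in_ray: "\<infinity> \<in> ray r c"
  unfolding ray_def by simp

lemma insert_infinity_ereal_image: "insert \<infinity> (ereal ` {t. r < t \<or> (c \<and> t = r)}) = ray r c"
proof (rule set_eqI)
  fix x :: ereal show "x \<in> insert \<infinity> (ereal ` {t. r < t \<or> (c \<and> t = r)}) \<longleftrightarrow> x \<in> ray r c"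
    unfolding ray_def by (cases x) auto
qed

lemma ray_subset_iff: "ray r c \<subseteq> ray s d \<longleftrightarrow> s < r \<or> (s = r \<and> (c \<longrightarrow> d))"
proof
  assume sub: "ray r c \<subseteq> ray s d"
  show "s < r \<or> (s = r \<and> (c \<longrightarrow> d))"
  proof (rule ccontr)
    assume "\<not> ?thesis"
    then consider "r < s" | "r = s" "c" "\<not> d" by (auto simp: not_less le_less)
    then show False
    proof cases
      case 1
      then have "ereal ((r + s) / 2) \<in> ray r c - ray s d" unfolding ray_def by simp
      then show False using sub by blast
    next
      case 2
      then have "ereal r \<in> ray r c - ray s d" unfolding ray_def by simp
      then show False using sub by blast
    qed
  qed
next
  assume "s < r \<or> (s = r \<and> (c \<longrightarrow> d))"
  then show "ray r c \<subseteq> ray s d"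
    unfolding ray_def using ereal_less_le order.strict_trans by fastforce
qed

lemma R1_mult_commute: "R1_mult A B = R1_mult B A"
  unfolding R1_mult_def by (auto, (metis add.commute)+)

lemma R1_mult_ray: "R1_mult (ray r c) (ray s d) = ray (r + s) (c \<and> d)"
proof (rule set_eqI)
  fix z
  show "z \<in> R1_mult (ray r c) (ray s d) \<longleftrightarrow> z \<in> ray (r + s) (c \<and> d)"
  proof
    assume "z \<in> R1_mult (ray r c) (ray s d)"
    then obtain x y where xy: "z = x + y" "x \<in> ray r c" "y \<in> ray s d" unfolding R1_mult_def by blast
    then show "z \<in> ray (r + s) (c \<and> d)"
      unfolding ray_def by (cases x; cases y) auto
  next
    assume z: "z \<in> ray (r + s) (c \<and> d)"
    show "z \<in> R1_mult (ray r c) (ray s d)"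
    proof (cases z)
      case (real t)
      show ?thesis
      proof (cases "c \<and> d \<and> t = r + s")
        case True
        then have "z = ereal r + ereal s" "ereal r \<in> ray r c" "ereal s \<in> ray s d"
          using real unfolding ray_def by auto
        then show ?thesis unfolding R1_mult_def by blast
      next
        case False
        define h where "h = (t - r - s) / 2"
        have "0 < h" unfolding h_def using False z real unfolding ray_def by auto
        then have "z = ereal (r + h) + ereal (s + h)" "ereal (r + h) \<in> ray r c" "ereal (s + h) \<in> ray s d"
          using real unfolding h_def ray_def by auto
        then show ?thesis unfolding R1_mult_def by blast
      qed
    next
      case PInf
      then have "z = \<infinity> + \<infinity>" by simp
      then show ?thesis unfolding R1_mult_def using infinity_in_ray by blast
    qed (use z in \<open>simp add: ray_def\<close>)
  qed
qed

lemma R1_mult_insert_infinity: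
  "R1_mult (insert \<infinity> (ereal ` A)) (insert \<infinity> (ereal ` B))
     = insert \<infinity> (ereal ` {a + b | a b. a \<in> A \<and> b \<in> B})"
proof (rule set_eqI, rule iffI)
  fix z assume "z \<in> R1_mult (insert \<infinity> (ereal ` A)) (insert \<infinity> (ereal ` B))"
  then show "z \<in> insert \<infinity> (ereal ` {a + b | a b. a \<in> A \<and> b \<in> B})"
    unfolding R1_mult_def by auto (use image_eqI in blast)
next
  fix z assume "z \<in> insert \<infinity> (ereal ` {a + b | a b. a \<in> A \<and> b \<in> B})"
  then consider "z = \<infinity> + \<infinity>" | a b where "a \<in> A" "b \<in> B" "z = ereal a + ereal b" by auto
  then show "z \<in> R1_mult (insert \<infinity> (ereal ` A)) (insert \<infinity> (ereal ` B))"
    unfolding R1_mult_def by cases blast+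
qed

section \<open>The valuation\<close>

locale pseudo_Dedekind_valuation = pseudo_Dedekind_chain_domain +
  fixes u :: 'a
  assumes u: "is_principal u" "u \<noteq> bot" "u \<noteq> top"
begin

abbreviation nz_principal :: "'a \<Rightarrow> bool" where
  "nz_principal x \<equiv> is_principal x \<and> x \<noteq> bot"

lemma nz_principal_mult: "nz_principal x \<Longrightarrow> nz_principal y \<Longrightarrow> nz_principal (m x y)"
  using principal_mult by simp

lemma nz_principal_pow: "nz_principal x \<Longrightarrow> nz_principal (pow x n)"
  using principal_pow pow_neq_bot by blast

lemma nz_principal_top: "nz_principal top"
  using principal_top bot_neq_top by simp

lemma pow_le_pow_u_iff:
  "nz_principal x \<Longrightarrow> pow x q \<le> pow u n \<longleftrightarrow> n \<le> log_floor u (pow x q)"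
  using le_pow_iff_le_log_floor[OF u] pow_neq_bot by blast

lemma pow_u_Suc_log_floor_less:
  "nz_principal x \<Longrightarrow> pow u (Suc (log_floor u (pow x q))) < pow x q"
  using pow_Suc_log_floor_less[OF u] pow_neq_bot by blast

lemma log_floor_cross_bound:
  assumes x: "nz_principal x" and "q \<ge> 1"
  shows "log_floor u (pow x q) * r < Suc (log_floor u (pow x r)) * q"
proof -
  have "pow (pow x q) r \<le> pow (pow u (log_floor u (pow x q))) r"
    using pow_le_pow_u_iff[OF x] by (simp add: pow_mono)
  then have le: "pow x (r * q) \<le> pow u (log_floor u (pow x q) * r)"
    by (simp add: pow_pow mult.commute)
  obtain q' where q': "q = Suc q'" using \<open>q \<ge> 1\<close> by (cases q) auto
  have "pow (pow u (Suc (log_floor u (pow x r)))) (Suc q') < pow (pow x r) (Suc q')"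
    using pow_strict_mono principal_pow pow_u_Suc_log_floor_less x by blast
  then have "pow u (Suc (log_floor u (pow x r)) * q) < pow x (r * q)"
    by (simp only: q' pow_pow)
  then have "pow u (Suc (log_floor u (pow x r)) * q) < pow u (log_floor u (pow x q) * r)"
    using le by simp
  then show ?thesis using pow_less_pow_iff[OF u] by blast
qed

text \<open>\<open>val x\<close> is the logarithm of \<open>x\<close> to the base \<open>u\<close>; \<open>log_floor u (x\<^sup>q) / q\<close> approximates it
  to within \<open>1 / q\<close>.\<close>

definition val :: "'a \<Rightarrow> real" where
  "val x = (SUP q\<in>{1..}. real (log_floor u (pow x q)) / real q)"

lemma val_le_Suc_log_floor_div:
  assumes x: "nz_principal x" and r: "r \<ge> 1"
  shows "val x \<le> real (Suc (log_floor u (pow x r))) / real r"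
  unfolding val_def
proof (rule cSUP_least)
  fix q :: nat assume q: "q \<in> {1..}"
  have "log_floor u (pow x q) * r < Suc (log_floor u (pow x r)) * q"
    using log_floor_cross_bound[OF x] q by simp
  then have "real (log_floor u (pow x q)) * real r < real (Suc (log_floor u (pow x r))) * real q"
    by (simp only: of_nat_mult[symmetric] of_nat_less_iff)
  then show "real (log_floor u (pow x q)) / real q \<le> real (Suc (log_floor u (pow x r))) / real r"
    using q r by (simp add: divide_simps)
qed auto

lemma log_floor_le_val:
  assumes x: "nz_principal x" and q: "q \<ge> 1"
  shows "real (log_floor u (pow x q)) \<le> real q * val x"
proof -
  have "bdd_above ((\<lambda>q. real (log_floor u (pow x q)) / real q) ` {1..})"
  proof (rule bdd_aboveI2)
    fix q :: nat assume q: "q \<in> {1..}"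
    have "log_floor u (pow x q) * 1 < Suc (log_floor u (pow x 1)) * q"
      using log_floor_cross_bound[OF x, of q 1] q by simp
    then have "real (log_floor u (pow x q)) < real (Suc (log_floor u (pow x 1))) * real q"
      by (simp only: mult_1_right of_nat_mult[symmetric] of_nat_less_iff)
    then show "real (log_floor u (pow x q)) / real q \<le> real (Suc (log_floor u (pow x 1)))"
      using q by (simp add: divide_le_eq)
  qed
  then have "real (log_floor u (pow x q)) / real q \<le> val x"
    unfolding val_def using q by (intro cSUP_upper) auto
  then show ?thesis using q by (simp add: divide_simps mult.commute)
qed

lemma val_le_log_floor:
  assumes x: "nz_principal x" and q: "q \<ge> 1"
  shows "real q * val x \<le> real (log_floor u (pow x q)) + 1"
  using val_le_Suc_log_floor_div[OF assms] q by (simp add: divide_simps mult.commute)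

lemma val_lower_bound:
  assumes x: "nz_principal x" and q: "q \<ge> 1" and le: "pow x q \<le> pow u p"
  shows "real p \<le> real q * val x"
proof -
  have "real p \<le> real (log_floor u (pow x q))" using pow_le_pow_u_iff[OF x] le by simp
  then show ?thesis using log_floor_le_val[OF x q] by linarith
qed

lemma val_upper_bound:
  assumes x: "nz_principal x" and q: "q \<ge> 1" and less: "pow u p < pow x q"
  shows "real q * val x \<le> real p"
proof -
  have "\<not> p \<le> log_floor u (pow x q)"
    using pow_le_pow_u_iff[OF x, of q p] less not_le_iff_less by blast
  then have "real (log_floor u (pow x q)) + 1 \<le> real p" by simp
  then show ?thesis using val_le_log_floor[OF x q] by linarith
qed

lemma val_mult:
  assumes x: "nz_principal x" and y: "nz_principal y"
  shows "val (m x y) = val x + val y"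
proof (rule eq_iff_diff_eq_0[THEN iffD2], rule zero_if_multiples_bounded)
  fix q :: nat assume q: "q \<ge> 1"
  define a b where "a = log_floor u (pow x q)" and "b = log_floor u (pow y q)"
  have xy: "nz_principal (m x y)" using nz_principal_mult x y .
  have "pow (m x y) q \<le> pow u (a + b)"
    unfolding pow_mult_base pow_add a_def b_def using pow_le_pow_u_iff x y by (simp add: mult_mono)
  then have lower: "real (a + b) \<le> real q * val (m x y)" using val_lower_bound xy q by blast
  have "m (pow u (Suc a)) (pow u (Suc b)) < m (pow x q) (pow y q)"
    unfolding a_def b_def
    using mult_strict_mono principal_pow pow_u_Suc_log_floor_less x y by blast
  then have "pow u (Suc a + Suc b) < pow (m x y) q" by (simp only: pow_add pow_mult_base)
  then have upper: "real q * val (m x y) \<le> real (Suc a + Suc b)" using val_upper_bound xy q by blast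
  have "real a \<le> real q * val x" "real q * val x \<le> real a + 1"
       "real b \<le> real q * val y" "real q * val y \<le> real b + 1"
    unfolding a_def b_def using log_floor_le_val val_le_log_floor x y q by auto
  with lower upper show "\<bar>real q * (val (m x y) - (val x + val y))\<bar> \<le> 2"
    by (simp add: right_diff_distrib distrib_left abs_le_iff)
qed

lemma val_top: "val top = 0"
  using val_mult[OF nz_principal_top nz_principal_top] by simp

lemma val_nonneg: "nz_principal x \<Longrightarrow> 0 \<le> val x"
  using log_floor_le_val[of x 1] by simp

lemma val_pow: "nz_principal d \<Longrightarrow> val (pow d k) = real k * val d"
  by (induction k) (simp_all add: val_top val_mult nz_principal_pow algebra_simps)

lemma val_antimono:
  assumes x: "nz_principal x" and y: "nz_principal y" and "x \<le> y"
  shows "val y \<le> val x"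
  unfolding val_def[of y]
proof (rule cSUP_least)
  fix q :: nat assume q: "q \<in> {1..}"
  have "pow x q \<le> pow u (log_floor u (pow y q))"
    using pow_mono[OF \<open>x \<le> y\<close>] pow_le_pow_u_iff[OF y] order_trans by blast
  then have "real (log_floor u (pow y q)) \<le> real q * val x" using val_lower_bound x q by simp
  then show "real (log_floor u (pow y q)) / real q \<le> val x" using q by (simp add: divide_simps mult.commute)
qed auto

lemma val_pos:
  assumes x: "nz_principal x" "x \<noteq> top"
  shows "0 < val x"
proof -
  obtain k where k: "pow x k < u" using archimedean x u by blast
  have k1: "k \<ge> 1" using k u by (cases k) (simp_all add: not_le_iff_less[symmetric])
  have "pow x k \<le> pow u 1" using k by simp
  then have "real 1 \<le> real k * val x" by (rule val_lower_bound[OF x(1) k1])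
  then show ?thesis using k1 zero_less_mult_pos[of "real k" "val x"] by simp
qed

lemma val_strict_antimono:
  assumes x: "nz_principal x" and y: "nz_principal y" and less: "x < y"
  shows "val y < val x"
proof -
  define c where "c = res m x y"
  have x_eq: "x = m c y" unfolding c_def using principal_factor y less by simp
  have c: "nz_principal c" using x_eq x principal_res unfolding c_def by auto
  have "c \<noteq> top" using x_eq less by auto
  then have "0 < val c" using val_pos c by blast
  moreover have "val x = val c + val y" using x_eq val_mult c y by simp
  ultimately show ?thesis by simp
qed

lemma le_iff_val_le:
  assumes x: "nz_principal x" and y: "nz_principal y"
  shows "x \<le> y \<longleftrightarrow> val y \<le> val x"
proof
  show "x \<le> y \<Longrightarrow> val y \<le> val x" by (rule val_antimono[OF x y])
  show "val y \<le> val x \<Longrightarrow> x \<le> y"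
    using val_strict_antimono[OF y x] not_le_iff_less by fastforce
qed

lemma val_inj:
  assumes "nz_principal x" "nz_principal y" "val x = val y"
  shows "x = y"
  using le_iff_val_le[OF assms(1,2)] le_iff_val_le[OF assms(2,1)] assms(3) by (simp add: order.antisym)

end

section \<open>The non-discrete case\<close>

locale nondiscrete_pD_chain_domain = pseudo_Dedekind_valuation +
  assumes max_elt_not_principal: "\<not> is_principal max_elt"
begin


text \<open>Since \<open>max_elt\<close> is not principal but is the join of the principal elements below it,
  some principal \<open>s \<le> max_elt\<close> lies strictly above \<open>w\<close>, and \<open>w = (w : s) s\<close> splits \<open>w\<close>.\<close>

lemma exists_half_val:
  assumes w: "nz_principal w" "w \<noteq> top"
  shows "\<exists>d. nz_principal d \<and> d \<noteq> top \<and> 2 * val d \<le> val w"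
proof -
  have "\<not> max_elt \<le> w" using le_max_elt[OF w(2)] max_elt_not_principal w by auto
  have "\<exists>s. is_principal s \<and> s \<le> max_elt \<and> \<not> s \<le> w"
  proof (rule ccontr)
    assume "\<not> ?thesis"
    then have "Sup {p. is_principal p \<and> p \<le> max_elt} \<le> w" by (auto intro!: Sup_least)
    then show False using Sup_principal_below[of max_elt] \<open>\<not> max_elt \<le> w\<close> by simp
  qed
  then obtain s where s: "is_principal s" "s \<le> max_elt" "w < s" using not_le_iff_less by blast
  have s_top: "s \<noteq> top" using s(2) max_elt_neq_top top_unique by auto
  define d where "d = res m w s"
  have w_eq: "w = m d s" unfolding d_def using principal_factor s less_imp_le by blast
  have d: "nz_principal d" "d \<noteq> top"
    using w_eq w s(3) principal_res[of w s] unfolding d_def by auto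
  have s_nz: "nz_principal s" using s(1,3) by auto
  have val_w: "val w = val d + val s" using w_eq val_mult d s_nz by simp
  show ?thesis
  proof (cases "val d \<le> val s")
    case True
    then show ?thesis using val_w d by (intro exI[of _ d]) simp
  next
    case False
    then show ?thesis using val_w s_nz s_top by (intro exI[of _ s]) simp
  qed
qed

lemma exists_small_val:
  assumes e: "0 < e"
  shows "\<exists>d. nz_principal d \<and> d \<noteq> top \<and> val d < e"
proof -
  have small: "\<exists>d. nz_principal d \<and> d \<noteq> top \<and> 2 ^ k * val d \<le> val u" for k
  proof (induction k)
    case (Suc k)
    then obtain d where d: "nz_principal d" "d \<noteq> top" "2 ^ k * val d \<le> val u" by blast
    obtain d' where d': "nz_principal d'" "d' \<noteq> top" "2 * val d' \<le> val d"
      using exists_half_val d by blast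
    have "2 ^ Suc k * val d' = 2 ^ k * (2 * val d')" by simp
    also have "\<dots> \<le> 2 ^ k * val d" using d'(3) by simp
    also have "\<dots> \<le> val u" by (rule d(3))
    finally show ?case using d' by blast
  qed (use u in auto)
  obtain k where "val u / e < 2 ^ k" using real_arch_pow[of 2 "val u / e"] by auto
  then have "val u < 2 ^ k * e" using e by (simp add: divide_less_eq)
  moreover obtain d where d: "nz_principal d" "d \<noteq> top" "2 ^ k * val d \<le> val u"
    using small by blast
  ultimately have "2 ^ k * val d < 2 ^ k * e" by linarith
  then show ?thesis using d by (intro exI[of _ d]) simp
qed

lemma exists_val_between:
  assumes r: "0 \<le> r" and e: "0 < e"
  shows "\<exists>z. nz_principal z \<and> r < val z \<and> val z < r + e"
proof -
  obtain d where d: "nz_principal d" "d \<noteq> top" "val d < e" using exists_small_val e by blast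
  have vd: "0 < val d" using val_pos d by blast
  define n where "n = nat \<lfloor>r / val d\<rfloor>"
  have "real n = of_int \<lfloor>r / val d\<rfloor>" unfolding n_def using r vd by simp
  then have "real n \<le> r / val d" "r / val d < real n + 1" by linarith+
  then have "real n * val d \<le> r" "r < (real n + 1) * val d"
    using vd by (simp_all add: divide_simps)
  moreover have "val (pow d (Suc n)) = (real n + 1) * val d"
    using val_pow[OF d(1), of "Suc n"] by (simp add: algebra_simps)
  moreover have "nz_principal (pow d (Suc n))" using nz_principal_pow d(1) by blast
  ultimately show ?thesis using d(3) by (intro exI[of _ "pow d (Suc n)"]) (auto simp: algebra_simps)
qed

definition val_above :: "real \<Rightarrow> 'a" where
  "val_above r = Sup {p. nz_principal p \<and> r < val p}"

text \<open>Both bounds come from the density of the values: principal elements of value slightly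
  above \<open>r\<close> lie below \<open>val_above r\<close>, and one of value slightly above \<open>val x - r\<close>
  multiplies \<open>val_above r\<close> into \<open>x\<close>.\<close>

lemma val_res_val_above:
  assumes r: "0 \<le> r" and x: "nz_principal x" "r < val x"
  shows "val (res m x (val_above r)) = val x - r"
proof -
  define c where "c = res m x (val_above r)"
  have c_le: "m c (val_above r) \<le> x" unfolding c_def by (rule res_mult_le)
  have "x \<le> c" unfolding c_def by (rule le_res[OF mult_le_left])
  then have c: "nz_principal c" using principal_res x unfolding c_def by (auto simp: bot_unique)
  have lower: "val x - r \<le> val c + e" if e: "e > 0" for e
  proof -
    obtain y where y: "nz_principal y" "r < val y" "val y < r + e"
      using exists_val_between[OF r e] by blast
    have "y \<le> val_above r" unfolding val_above_def using y by (auto intro: Sup_upper)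
    then have "m c y \<le> x" using c_le mult_mono_right order_trans by metis
    then have "val x \<le> val (m c y)" using val_antimono nz_principal_mult c y x by blast
    then show ?thesis using val_mult c y by simp
  qed
  have upper: "val c \<le> val x - r + e" if e: "e > 0" for e
  proof -
    obtain z where z: "nz_principal z" "val x - r < val z" "val z < val x - r + e"
      using exists_val_between[of "val x - r" e] x e by auto
    have "m z (val_above r) \<le> x"
      unfolding val_above_def mult_Sup_right
    proof (rule Sup_least)
      fix t assume "t \<in> m z ` {p. nz_principal p \<and> r < val p}"
      then obtain p where p: "nz_principal p" "r < val p" "t = m z p" by blast
      then have "val x \<le> val (m z p)" using val_mult z by simp
      then show "t \<le> x" using le_iff_val_le[OF nz_principal_mult[OF z(1) p(1)] x(1)] p(3) by simp
    qed
    then have "val c \<le> val z" using val_antimono z c le_res unfolding c_def by blast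
    then show ?thesis using z by simp
  qed
  show ?thesis
    using field_le_epsilon[OF lower] field_le_epsilon[OF upper] unfolding c_def by simp
qed

lemma exists_val_eq:
  assumes r: "0 \<le> r"
  shows "\<exists>e. nz_principal e \<and> val e = r"
proof -
  obtain x where x: "nz_principal x" "r < val x" using exists_val_between[OF r, of 1] by auto
  define c where "c = res m x (val_above r)"
  have x_le_c: "x \<le> c" unfolding c_def by (rule le_res[OF mult_le_left])
  have c: "nz_principal c" using principal_res x x_le_c unfolding c_def by (auto simp: bot_unique)
  define e where "e = res m x c"
  have x_eq: "x = m e c" unfolding e_def using principal_factor c x_le_c by blast
  have e: "nz_principal e" using principal_res x x_eq unfolding e_def by auto
  have "val x = val e + val c" using x_eq val_mult e c by simp
  then show ?thesis using e val_res_val_above[OF r x] unfolding c_def by (intro exI[of _ e]) simp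
qed

definition val_set :: "'a \<Rightarrow> real set" where
  "val_set y = val ` {p. nz_principal p \<and> p \<le> y}"

lemma val_set_nonneg: "t \<in> val_set y \<Longrightarrow> 0 \<le> t"
  unfolding val_set_def using val_nonneg by auto

lemma val_set_upward_closed:
  assumes t: "t \<in> val_set y" and "t \<le> t'"
  shows "t' \<in> val_set y"
proof -
  obtain p where p: "nz_principal p" "p \<le> y" "val p = t" using t unfolding val_set_def by blast
  obtain e where e: "nz_principal e" "val e = t'"
    using exists_val_eq val_set_nonneg[OF t] \<open>t \<le> t'\<close> by (meson order_trans)
  have "e \<le> p" using le_iff_val_le e p \<open>t \<le> t'\<close> by simp
  then show ?thesis unfolding val_set_def using e p order_trans by blast
qed

lemma val_set_bot: "val_set bot = {}"
  unfolding val_set_def by (auto simp: bot_unique)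

lemma le_iff_val_set_subset: "y \<le> y' \<longleftrightarrow> val_set y \<subseteq> val_set y'"
proof
  assume "y \<le> y'"
  then show "val_set y \<subseteq> val_set y'" unfolding val_set_def using order.trans by blast
next
  assume sub: "val_set y \<subseteq> val_set y'"
  have "p \<le> y'" if p: "is_principal p" "p \<le> y" for p
  proof (cases "p = bot")
    case False
    then have "val p \<in> val_set y'" using sub p unfolding val_set_def by blast
    then obtain p' where p': "nz_principal p'" "p' \<le> y'" "val p' = val p"
      unfolding val_set_def by auto
    then have "p' = p" using val_inj p False by blast
    then show ?thesis using p' by simp
  qed simp
  then have "Sup {p. is_principal p \<and> p \<le> y} \<le> y'" by (auto intro!: Sup_least)
  then show "y \<le> y'" using Sup_principal_below[of y] by simp
qed

text \<open>A principal element below \<open>y y'\<close> lies below a product \<open>s\<^sub>1 s\<^sub>2\<close> of principal elements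
  below \<open>y\<close> and \<open>y'\<close>; upward closure then splits its value.\<close>

lemma val_set_mult: "val_set (m y y') = {a + b | a b. a \<in> val_set y \<and> b \<in> val_set y'}"
proof (intro set_eqI iffI)
  fix t assume "t \<in> {a + b | a b. a \<in> val_set y \<and> b \<in> val_set y'}"
  then obtain p p' where "nz_principal p" "p \<le> y" "nz_principal p'" "p' \<le> y'" "t = val p + val p'"
    unfolding val_set_def by blast
  then have "nz_principal (m p p')" "m p p' \<le> m y y'" "val (m p p') = t"
    using nz_principal_mult mult_mono val_mult by auto
  then show "t \<in> val_set (m y y')" unfolding val_set_def by blast
next
  fix t assume "t \<in> val_set (m y y')"
  then obtain q where q: "nz_principal q" "q \<le> m y y'" "val q = t" unfolding val_set_def by blast
  then obtain s1 s2 where s: "is_principal s1" "s1 \<le> y" "is_principal s2" "s2 \<le> y'" "q \<le> m s1 s2"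
    using principal_le_mult_Sup_imp_le_mult[of q "{p. is_principal p \<and> p \<le> y}" "{p. is_principal p \<and> p \<le> y'}"]
      Sup_principal_below[of y] Sup_principal_below[of y'] by auto
  have nz: "s1 \<noteq> bot" "s2 \<noteq> bot" using s(5) q(1) by (auto simp: bot_unique)
  have "val s1 + val s2 \<le> val q"
    using val_antimono[OF q(1) _ s(5)] val_mult s nz nz_principal_mult by simp
  moreover have "val s1 \<in> val_set y" "val s2 \<in> val_set y'" unfolding val_set_def using s nz by auto
  ultimately have "val s1 \<in> val_set y" "val q - val s1 \<in> val_set y'"
    using val_set_upward_closed by auto
  then show "t \<in> {a + b | a b. a \<in> val_set y \<and> b \<in> val_set y'}" using q(3) by force
qed

lemma val_set_val_above:
  assumes r: "0 \<le> r"
  shows "val_set (val_above r) = {t. r < t}"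
proof (intro set_eqI iffI)
  fix t assume "t \<in> val_set (val_above r)"
  then obtain p where p: "nz_principal p" "p \<le> val_above r" "val p = t" unfolding val_set_def by blast
  then obtain s where "nz_principal s" "r < val s" "p \<le> s"
    using principal_le_Sup_imp_le_mem unfolding val_above_def by blast
  then show "t \<in> {t. r < t}" using val_antimono p by fastforce
next
  fix t assume "t \<in> {t. r < t}"
  then have "0 \<le> t" using r by simp
  then obtain e where e: "nz_principal e" "val e = t" using exists_val_eq by blast
  then have "e \<le> val_above r" unfolding val_above_def using \<open>t \<in> {t. r < t}\<close> by (auto intro: Sup_upper)
  then show "t \<in> val_set (val_above r)" unfolding val_set_def using e by blast
qed

lemma val_set_principal:
  assumes e: "nz_principal e"
  shows "val_set e = {t. val e \<le> t}"
proof (intro set_eqI iffI)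
  fix t assume "t \<in> val_set e"
  then obtain p where "nz_principal p" "p \<le> e" "val p = t" unfolding val_set_def by blast
  then show "t \<in> {t. val e \<le> t}" using val_antimono e by blast
next
  fix t assume "t \<in> {t. val e \<le> t}"
  moreover have "val e \<in> val_set e" unfolding val_set_def using e by blast
  ultimately show "t \<in> val_set e" using val_set_upward_closed by simp
qed

lemma val_set_cases:
  assumes "y \<noteq> bot"
  shows "\<exists>r c. r \<ge> 0 \<and> val_set y = {t. r < t \<or> (c \<and> t = r)}"
proof -
  have ne: "val_set y \<noteq> {}" unfolding val_set_def using exists_principal_below assms by blast
  have bdd: "bdd_below (val_set y)" using val_set_nonneg by (rule bdd_belowI)
  define r where "r = Inf (val_set y)"
  have "r \<ge> 0" unfolding r_def using ne val_set_nonneg by (rule cInf_greatest)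
  moreover have "t \<in> val_set y \<longleftrightarrow> r < t \<or> (r \<in> val_set y \<and> t = r)" for t
  proof
    assume t: "t \<in> val_set y"
    then show "r < t \<or> (r \<in> val_set y \<and> t = r)"
      using cInf_lower[OF t bdd] t unfolding r_def by (auto simp: less_le)
  next
    assume "r < t \<or> (r \<in> val_set y \<and> t = r)"
    then show "t \<in> val_set y"
    proof
      assume "r < t"
      then obtain t' where "t' \<in> val_set y" "t' < t"
        using cInf_less_iff[OF ne bdd] unfolding r_def by blast
      then show ?thesis using val_set_upward_closed less_imp_le by blast
    qed auto
  qed
  then have "val_set y = {t. r < t \<or> (r \<in> val_set y \<and> t = r)}" by blast
  ultimately show ?thesis by (intro exI[of _ r] exI[of _ "r \<in> val_set y"]) simp
qed

definition R1_repr :: "'a \<Rightarrow> ereal set" where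
  "R1_repr y = insert \<infinity> (ereal ` val_set y)"

lemma R1_repr_in_carrier: "R1_repr y \<in> R1_carrier"
proof (cases "y = bot")
  case True
  then show ?thesis unfolding R1_repr_def R1_carrier_def by (simp add: val_set_bot)
next
  case False
  then obtain r c where "r \<ge> 0" "val_set y = {t. r < t \<or> (c \<and> t = r)}"
    using val_set_cases by blast
  then have "r \<ge> 0 \<and> R1_repr y = ray r c"
    unfolding R1_repr_def using insert_infinity_ereal_image by simp
  then show ?thesis unfolding R1_carrier_iff_ray by blast
qed

lemma range_R1_repr: "range R1_repr = R1_carrier"
proof (intro equalityI subsetI)
  fix X assume "X \<in> R1_carrier"
  then consider "X = {\<infinity>}" | r c where "r \<ge> 0" "X = ray r c"
    unfolding R1_carrier_iff_ray by blast
  then show "X \<in> range R1_repr"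
  proof cases
    case 1
    then have "X = R1_repr bot" unfolding R1_repr_def by (simp add: val_set_bot)
    then show ?thesis by simp
  next
    case (2 r c)
    obtain y where "val_set y = {t. r < t \<or> (c \<and> t = r)}"
    proof (cases c)
      case True
      obtain e where e: "nz_principal e" "val e = r" using exists_val_eq 2(1) by blast
      show ?thesis using that[of e] val_set_principal[OF e(1)] e(2) True by (auto simp: le_less)
    next
      case False
      show ?thesis using that[of "val_above r"] val_set_val_above[OF 2(1)] False by simp
    qed
    then have "X = R1_repr y" unfolding R1_repr_def using 2(2) insert_infinity_ereal_image by simp
    then show ?thesis by simp
  qed
qed (use R1_repr_in_carrier in blast)

theorem ml_iso_R1: "ml_iso m R1_carrier R1_le R1_mult"
proof (rule ml_isoI)
  show "a \<le> b \<longleftrightarrow> R1_le (R1_repr a) (R1_repr b)" for a b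
    unfolding R1_le_def R1_repr_def le_iff_val_set_subset by auto
  show "R1_repr (m a b) = R1_mult (R1_repr a) (R1_repr b)" for a b
    unfolding R1_repr_def val_set_mult R1_mult_insert_infinity ..
qed (rule range_R1_repr)

end

context pseudo_Dedekind_chain_domain
begin

theorem ml_iso_R1_if_max_elt_not_principal:
  assumes "\<not> is_principal max_elt"
  shows "ml_iso m R1_carrier R1_le R1_mult"
proof -
  have "max_elt \<noteq> bot" using assms principal_bot by auto
  then obtain u where u: "is_principal u" "u \<noteq> bot" "u \<le> max_elt"
    using exists_principal_below by blast
  then have "u \<noteq> top" using max_elt_neq_top top_unique by auto
  then interpret nondiscrete_pD_chain_domain m u
    using u assms by unfold_locales auto
  show ?thesis by (rule ml_iso_R1)
qed

end

section \<open>Sharpness of the models\<close>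

definition sharp_on :: "'b set \<Rightarrow> ('b \<Rightarrow> 'b \<Rightarrow> bool) \<Rightarrow> ('b \<Rightarrow> 'b \<Rightarrow> 'b) \<Rightarrow> bool" where
  "sharp_on C le mu \<longleftrightarrow> (\<forall>A1\<in>C. \<forall>A2\<in>C. \<forall>B\<in>C. le (mu A1 A2) B \<longrightarrow>
      (\<exists>B1\<in>C. \<exists>B2\<in>C. le A1 B1 \<and> le A2 B2 \<and> B = mu B1 B2))"

lemma sharp_if_ml_iso_sharp_on:
  fixes m :: "'a::complete_lattice \<Rightarrow> 'a \<Rightarrow> 'a"
  assumes iso: "ml_iso m C le mu" and sharp: "sharp_on C le mu"
  shows "sharp m"
proof -
  obtain f where f: "bij_betw f UNIV C" "\<And>a b. a \<le> b \<longleftrightarrow> le (f a) (f b)"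
      "\<And>a b. f (m a b) = mu (f a) (f b)"
    using iso unfolding ml_iso_def by blast
  have fC: "f a \<in> C" for a using f(1) unfolding bij_betw_def by blast
  have "\<exists>b1 b2. a1 \<le> b1 \<and> a2 \<le> b2 \<and> b = m b1 b2" if "m a1 a2 \<le> b" for a1 a2 b
  proof -
    have "le (mu (f a1) (f a2)) (f b)" using that f(2,3) by metis
    then obtain B1 B2 where B: "B1 \<in> C" "B2 \<in> C" "le (f a1) B1" "le (f a2) B2" "f b = mu B1 B2"
      using sharp fC unfolding sharp_on_def by blast
    obtain b1 b2 where "B1 = f b1" "B2 = f b2" using B(1,2) f(1) unfolding bij_betw_def by blast
    then show ?thesis using B f(1,2,3) unfolding bij_betw_def inj_def by metis
  qed
  then show ?thesis unfolding sharp_def by blast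
qed

lemma Zm_sharp_on: "sharp_on Zm_carrier Zm_le Zm_mult"
  unfolding sharp_on_def
proof (intro ballI impI)
  fix A1 A2 B assume A1: "A1 \<in> Zm_carrier" and A2: "A2 \<in> Zm_carrier" and B: "B \<in> Zm_carrier"
    and le: "Zm_le (Zm_mult A1 A2) B"
  have top: "Some 0 \<in> Zm_carrier" "Zm_le X (Some 0)" "Zm_mult X (Some 0) = X" "Zm_mult (Some 0) X = X"
    if "X \<in> Zm_carrier" for X
    using that unfolding Zm_carrier_def by (cases X; auto)+
  show "\<exists>B1\<in>Zm_carrier. \<exists>B2\<in>Zm_carrier. Zm_le A1 B1 \<and> Zm_le A2 B2 \<and> B = Zm_mult B1 B2"
  proof (cases "A1 = None \<or> A2 = None")
    case True
    then show ?thesis using top A1 A2 B by (metis Zm_le.simps(1))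
  next
    case False
    then obtain a1 a2 b where "A1 = Some a1" "A2 = Some a2" "B = Some b" "a1 + a2 \<le> b" "a1 \<le> 0" "a2 \<le> 0" "b \<le> 0"
      using le A1 A2 B unfolding Zm_carrier_def by (cases B) auto
    then show ?thesis unfolding Zm_carrier_def
      by (intro bexI[of _ "Some (max a1 b)"] bexI[of _ "Some (b - max a1 b)"]) auto
  qed
qed

lemma subset_closed_ray_0:
  assumes "X \<in> R1_carrier"
  shows "X \<subseteq> ray 0 True"
proof -
  consider "X = {\<infinity>}" | r c where "r \<ge> 0" "X = ray r c"
    using assms unfolding R1_carrier_iff_ray by blast
  then show ?thesis
  proof cases
    case (2 r c)
    then show ?thesis using ray_subset_iff[of r c 0 True] by auto
  qed (simp add: infinity_in_ray)
qed

lemma R1_mult_closed_ray_0: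
  assumes "X \<in> R1_carrier"
  shows "R1_mult X (ray 0 True) = X"
proof -
  consider "X = {\<infinity>}" | r c where "X = ray r c"
    using assms unfolding R1_carrier_iff_ray by blast
  then show ?thesis
  proof cases
    case 1
    then show ?thesis
      using R1_mult_insert_infinity[of "{}" "{t. 0 < t \<or> (True \<and> t = 0)}"]
        insert_infinity_ereal_image[of 0 True] by simp
  qed (simp add: R1_mult_ray)
qed

text \<open>The factorisation behind sharpness of \<open>\<real>\<^sub>1\<close> when \<open>A\<^sub>1 A\<^sub>2 \<subseteq> B\<close> but \<open>A\<^sub>1 \<not>\<subseteq> B\<close>:
  \<open>B\<^sub>1\<close> keeps the end point of \<open>A\<^sub>1\<close> and \<open>B\<^sub>2\<close> takes the rest.\<close>

lemma R1_mult_ray_factor: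
  assumes le: "ray (a1 + a2) (c1 \<and> c2) \<subseteq> ray b d" and not_le: "\<not> ray a1 c1 \<subseteq> ray b d"
  shows "ray a1 c1 \<subseteq> ray a1 (c1 \<or> d) \<and> ray a2 c2 \<subseteq> ray (b - a1) (d \<or> \<not> c1)
    \<and> ray b d = R1_mult (ray a1 (c1 \<or> d)) (ray (b - a1) (d \<or> \<not> c1)) \<and> b - a1 \<ge> 0"
proof -
  have "b < a1 + a2 \<or> (b = a1 + a2 \<and> (c1 \<and> c2 \<longrightarrow> d))" "\<not> (b < a1 \<or> (b = a1 \<and> (c1 \<longrightarrow> d)))"
    using le not_le ray_subset_iff by simp_all
  moreover have "(c1 \<or> d) \<and> (d \<or> \<not> c1) \<longleftrightarrow> d" by blast
  ultimately show ?thesis by (auto simp: ray_subset_iff R1_mult_ray)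
qed

lemma R1_sharp_on: "sharp_on R1_carrier R1_le R1_mult"
  unfolding sharp_on_def R1_le_def
proof (intro ballI impI)
  fix A1 A2 B assume A1: "A1 \<in> R1_carrier" and A2: "A2 \<in> R1_carrier" and B: "B \<in> R1_carrier"
    and le: "R1_mult A1 A2 \<subseteq> B"
  have top: "ray 0 True \<in> R1_carrier" unfolding R1_carrier_iff_ray by auto
  show "\<exists>B1\<in>R1_carrier. \<exists>B2\<in>R1_carrier. A1 \<subseteq> B1 \<and> A2 \<subseteq> B2 \<and> B = R1_mult B1 B2"
  proof (cases "A1 \<subseteq> B \<or> A2 \<subseteq> B")
    case True
    then show ?thesis
    proof
      assume "A1 \<subseteq> B"
      then show ?thesis using B top subset_closed_ray_0[OF A2] R1_mult_closed_ray_0[OF B] by blast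
    next
      assume "A2 \<subseteq> B"
      moreover have "B = R1_mult (ray 0 True) B" using R1_mult_closed_ray_0[OF B] R1_mult_commute by metis
      ultimately show ?thesis using B top subset_closed_ray_0[OF A1] by blast
    qed
  next
    case False
    have "\<infinity> \<in> B" using B infinity_in_ray unfolding R1_carrier_iff_ray by auto
    then have "A1 \<noteq> {\<infinity>}" "A2 \<noteq> {\<infinity>}" using False by auto
    then obtain a1 c1 a2 c2 where a: "a1 \<ge> 0" "A1 = ray a1 c1" "a2 \<ge> 0" "A2 = ray a2 c2"
      using A1 A2 unfolding R1_carrier_iff_ray by blast
    have prod: "R1_mult A1 A2 = ray (a1 + a2) (c1 \<and> c2)" using a by (simp add: R1_mult_ray)
    have "ereal (a1 + a2 + 1) \<in> R1_mult A1 A2" unfolding prod ray_def by simp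
    then have "B \<noteq> {\<infinity>}" using le by auto
    then obtain b d where b: "B = ray b d" using B unfolding R1_carrier_iff_ray by blast
    have "ray (a1 + a2) (c1 \<and> c2) \<subseteq> ray b d" "\<not> ray a1 c1 \<subseteq> ray b d"
      using le prod False a(2) b by simp_all
    note factor = R1_mult_ray_factor[OF this]
    have "ray a1 (c1 \<or> d) \<in> R1_carrier" "ray (b - a1) (d \<or> \<not> c1) \<in> R1_carrier"
      using a(1) factor unfolding R1_carrier_iff_ray by blast+
    then show ?thesis using factor a(2,4) b by blast
  qed
qed

theorem theorem3p8:
  fixes m :: "'a::complete_lattice \<Rightarrow> 'a \<Rightarrow> 'a"
  assumes "C_lattice m"
    and "lattice_domain m"
    and "(UNIV :: 'a set) \<noteq> {bot, top}"
    and "\<forall>x y :: 'a. x \<le> y \<or> y \<le> x"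
    and "\<forall>x :: 'a. \<exists>S. (\<forall>s\<in>S. principal_el m s) \<and> x = Sup S"
  shows "(sharp m \<longleftrightarrow> pseudo_Dedekind m) \<and>
         (pseudo_Dedekind m \<longleftrightarrow>
            (ml_iso m Zm_carrier Zm_le Zm_mult \<or> ml_iso m R1_carrier R1_le R1_mult))"
proof -
  interpret principal_chain_domain m
    using assms by unfold_locales (auto simp: C_lattice_def)
  have "ml_iso m Zm_carrier Zm_le Zm_mult \<or> ml_iso m R1_carrier R1_le R1_mult"
    if "pseudo_Dedekind m"
  proof -
    interpret pseudo_Dedekind_chain_domain m
      using that by unfold_locales
    show ?thesis
      using ml_iso_Zm_if_max_elt_principal ml_iso_R1_if_max_elt_not_principal
        max_elt_neq_bot[OF assms(3)] by blast
  qed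
  moreover have "sharp m" if "ml_iso m Zm_carrier Zm_le Zm_mult \<or> ml_iso m R1_carrier R1_le R1_mult"
    using that sharp_if_ml_iso_sharp_on[OF _ Zm_sharp_on] sharp_if_ml_iso_sharp_on[OF _ R1_sharp_on]
    by blast
  ultimately show ?thesis using sharp_imp_pseudo_Dedekind by blast
qed

end
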